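(* Let $A\in\mathbb{R}^{N\times N}$ be a symmetric matrix with elements $a_{kl}$ and non-zero diagonal entries, let $\Omega=\{1,\ldots,N\}$ be the nodal set of its graph, where nodes $k,l$ are adjacent iff $a_{kl}\ne0$, and for $\Omega'\subset\Omega$ let $\mathcal{A}(\Omega')$ denote the set of all nodes adjacent to some node of $\Omega'$. Suppose there exists a nonempty $\mathring{\Omega}\subsetneq\Omega$ such that $\mathcal{A}(\mathring{\Omega})\subsetneq\Omega$. Then there exist disjoint nonempty subsets $\mathring{\Omega}_1,\mathring{\Omega}_2$ and a set $\Gamma$ such that $\Omega=\mathring{\Omega}_1\cup\mathring{\Omega}_2\cup\Gamma$ (disjoint union) and $\Gamma=\mathcal{A}(\mathring{\Omega}_1)\setminus\mathring{\Omega}_1=\mathcal{A}(\mathring{\Omega}_2)\setminus\mathring{\Omega}_2$.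
   Context: $A$ is the sparse symmetric fine-grid stiffness matrix; the proposition underlies a divide-and-conquer splitting of $A$ into two subdomains $\Omega_i=\mathring{\Omega}_i\cup\Gamma$ coupled only through $\Gamma$. *)

theory Defs
  imports "HOL-Analysis.Analysis"
begin

text \<open>Nodes are the elements of the finite index type 'n (so Omega = UNIV).
  Nodes k, l are adjacent iff the entry A k l is non-zero.\<close>
definition adjacent :: "real^'n^'n \<Rightarrow> 'n \<Rightarrow> 'n \<Rightarrow> bool" where
  "adjacent A k l \<longleftrightarrow> A $ k $ l \<noteq> 0"

definition adj_set :: "real^'n^'n \<Rightarrow> 'n set \<Rightarrow> 'n set" where
  "adj_set A S = {l. \<exists>k\<in>S. adjacent A k l}"

end

theory Submission
  imports Defs
begin

text \<open>Take \<open>\<mathring>\<Omega>\<^sub>2\<close> to be the nodes not adjacent to \<open>\<mathring>\<Omega>\<close>, and \<open>\<mathring>\<Omega>\<^sub>1\<close> the nodes not adjacent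
  to \<open>\<mathring>\<Omega>\<^sub>2\<close>; \<open>\<Gamma>\<close> is what remains. By symmetry of the adjacency relation \<open>\<mathring>\<Omega>\<close> lies in
  \<open>\<mathring>\<Omega>\<^sub>1\<close>, so both parts are nonempty, and every node of \<open>\<Gamma>\<close> is adjacent to \<open>\<mathring>\<Omega>\<close> and hence to
  \<open>\<mathring>\<Omega>\<^sub>1\<close>; this makes \<open>\<Gamma>\<close> the boundary of both parts.\<close>

lemma adjacent_commute:
  assumes "transpose A = A"
  shows "adjacent A l k \<longleftrightarrow> adjacent A k l"
  using assms unfolding adjacent_def by (metis transpose_def vec_lambda_beta)

lemma subset_adj_set:
  assumes "\<And>k. A $ k $ k \<noteq> 0"
  shows "S \<subseteq> adj_set A S"
  using assms by (auto simp: adj_set_def adjacent_def)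

lemma subset_compl_adj_set_compl_adj_set:
  assumes "transpose A = A"
  shows "S \<subseteq> - adj_set A (- adj_set A S)"
  using adjacent_commute[OF assms] by (auto simp: adj_set_def)

lemma adj_set_diff_compl_adj_set_compl_adj_set:
  assumes symm: "transpose A = A"
    and O2: "O2 = - adj_set A S"
    and O1: "O1 = - adj_set A O2"
  shows "adj_set A O1 - O1 = adj_set A O2 - O2"
proof
  show "adj_set A O1 - O1 \<subseteq> adj_set A O2 - O2"
    using adjacent_commute[OF symm] unfolding O1 adj_set_def by blast
  have "S \<subseteq> O1"
    using subset_compl_adj_set_compl_adj_set[OF symm] unfolding O1 O2 .
  moreover have "adj_set A O2 - O2 \<subseteq> adj_set A S"
    unfolding O2 by blast
  ultimately show "adj_set A O2 - O2 \<subseteq> adj_set A O1 - O1"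
    unfolding O1 adj_set_def by blast
qed

theorem proposition2:
  fixes A :: "real^'n^'n"
  assumes symm: "transpose A = A"
    and diag: "\<And>k. A $ k $ k \<noteq> 0"
    and ex: "\<exists>S0. S0 \<noteq> {} \<and> S0 \<subset> (UNIV :: 'n set) \<and> adj_set A S0 \<subset> UNIV"
  shows "\<exists>O1 O2 \<Gamma>. O1 \<noteq> {} \<and> O2 \<noteq> {} \<and>
           O1 \<inter> O2 = {} \<and> O1 \<inter> \<Gamma> = {} \<and> O2 \<inter> \<Gamma> = {} \<and>
           UNIV = O1 \<union> O2 \<union> \<Gamma> \<and>
           \<Gamma> = adj_set A O1 - O1 \<and> \<Gamma> = adj_set A O2 - O2"
proof -
  obtain S0 where S0: "S0 \<noteq> {}" "adj_set A S0 \<subset> UNIV"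
    using ex by blast
  define O2 where "O2 = - adj_set A S0"
  define O1 where "O1 = - adj_set A O2"
  have "O2 \<noteq> {}"
    using S0(2) unfolding O2_def by blast
  moreover have "O1 \<noteq> {}"
    using S0(1) subset_compl_adj_set_compl_adj_set[OF symm, of S0] unfolding O1_def O2_def by blast
  moreover have "O1 \<inter> O2 = {}"
    using subset_adj_set[OF diag, of O2] unfolding O1_def by blast
  moreover have "adj_set A O1 - O1 = adj_set A O2 - O2"
    using adj_set_diff_compl_adj_set_compl_adj_set[OF symm O2_def O1_def] .
  moreover have "O1 \<inter> (adj_set A O2 - O2) = {}" "UNIV = O1 \<union> O2 \<union> (adj_set A O2 - O2)"
    unfolding O1_def by auto
  ultimately show ?thesis
    by (intro exI[of _ O1] exI[of _ O2] exI[of _ "adj_set A O2 - O2"]) simp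
qed

end
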